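(* Let $f\colon\Delta\to\Delta$ be a Bernoulli Young tower with $\mathbb P_{\mathcal A}(h_{\mathcal A}=n)=\theta(1-\theta)^{n-1}$ for all $n\ge1$, for some $0<\theta<1$, and let $D,\mathbb P_D$, $g\colon D\to\Delta$ and $D_k(x)$ be as in the context. Fix $p>2$ and let $$\delta_{k,p}=\int_D\sup_{x'\in D_k(x)}d^p(g(x),g(x'))\,d\mathbb P_D(x).$$ Then there exist $C_\delta>0$ and $0<\theta_\delta<1$ such that $\delta_{k,p}\le C_\delta\theta_\delta^{|k|}$ for all $k\in\mathbb Z$.
   Context: Bernoulli Young tower: given an at most countable probability space $(\mathcal{A},\mathbb{P}_{\mathcal A})$, an integrable $h_{\mathcal A}\colon\mathcal A\to\mathbb N$ and $0<\xi<1$, let $(X,\mathbb P_X)=(\mathcal A^{\mathbb N},\mathbb P_{\mathcal A}^{\mathbb N})$ with left shift $f_X$, $h(a_0,a_1,\dots)=h_{\mathcal A}(a_0)$, $\Delta=\{(x,\ell)\in X\times\mathbb Z:0\le\ell<h(x)\}$, $f(x,\ell)=(x,\ell+1)$ if $\ell<h(x)-1$ and $f(x,\ell)=(f_Xx,0)$ if $\ell=h(x)-1$. On $X$, $d(x,y)=\xi^{s(x,y)}$ with $s((a_j),(b_j))=\inf\{j\ge0:a_j\ne b_j\}$; on $\Delta$, $d((x,k),(y,j))=1$ if $k\ne j$ and $=d(x,y)$ if $k=j$. Construction: let $(\Omega,\mathbb P_\Omega)$ be a probability space carrying random variables $A_n\colon\Omega\to\mathcal A$, $n\ge1$, with $\mathbb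 P(A_n=a)=\mathbb P_{\mathcal A}(a)/\mathbb P_{\mathcal A}(h_{\mathcal A}=n)$ if $h_{\mathcal A}(a)=n$ and $0$ otherwise. Let $Z=\{0,1\}$ with $\mathbb P_Z(1)=\theta$, $\mathbb P_Z(0)=1-\theta$, $D=\Omega^{\mathbb Z}\times Z^{\mathbb Z}$ with $\mathbb P_D=\mathbb P_\Omega^{\mathbb Z}\times\mathbb P_Z^{\mathbb Z}$. For $x=((\omega_j)_{j\in\mathbb Z},(z_j)_{j\in\mathbb Z})\in D$ let $t_0(x)=\sup\{k\le0:z_k=1\}$ and $t_n(x)=\inf\{k>t_{n-1}(x):z_k=1\}$ for $n\ge1$ (finite a.s.). Define $g(x)=(y,-t_0(x))$ with $y=(A_{t_1-t_0}(\omega_{t_0}),A_{t_2-t_1}(\omega_{t_1}),\dots)\in X$. For $k\in\mathbb Z$, $D_k(x)$ is the set of $x'=((\omega'_j),(z'_j))\in D$ with $\omega'_j=\omega_j$ and $z'_j=z_j$ for all $j\ne k$. *)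

theory Defs
  imports "HOL-Probability.Probability"
begin

definition dX :: "real \<Rightarrow> (nat \<Rightarrow> 'a) \<Rightarrow> (nat \<Rightarrow> 'a) \<Rightarrow> real" where
  "dX xi x y = (if x = y then 0 else xi ^ (LEAST j. x j \<noteq> y j))"

definition dDelta :: "real \<Rightarrow> (nat \<Rightarrow> 'a) \<times> int \<Rightarrow> (nat \<Rightarrow> 'a) \<times> int \<Rightarrow> real" where
  "dDelta xi u v = (if snd u \<noteq> snd v then 1 else dX xi (fst u) (fst v))"

fun tseq :: "(int \<Rightarrow> bool) \<Rightarrow> nat \<Rightarrow> int" where
  "tseq z 0 = (GREATEST k. k \<le> 0 \<and> z k)"
| "tseq z (Suc n) = (LEAST k. k > tseq z n \<and> z k)"

definition gmap :: "(nat \<Rightarrow> 'o \<Rightarrow> 'a) \<Rightarrow> (int \<Rightarrow> 'o) \<times> (int \<Rightarrow> bool) \<Rightarrow> (nat \<Rightarrow> 'a) \<times> int" where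
  "gmap A x = (let \<omega> = fst x; z = snd x in
     ((\<lambda>j. A (nat (tseq z (Suc j) - tseq z j)) (\<omega> (tseq z j))), - tseq z 0))"

text \<open>The probability space (D, P_D) = (Omega^Z x Z^Z, P_Omega^Z x P_Z^Z), Z = {0,1} ~ bool.\<close>
definition PD :: "'o measure \<Rightarrow> real \<Rightarrow> ((int \<Rightarrow> 'o) \<times> (int \<Rightarrow> bool)) measure" where
  "PD M \<theta> = (\<Pi>\<^sub>M j\<in>(UNIV::int set). M) \<Otimes>\<^sub>M (\<Pi>\<^sub>M j\<in>(UNIV::int set). measure_pmf (bernoulli_pmf \<theta>))"

definition Dk :: "'o measure \<Rightarrow> real \<Rightarrow> int \<Rightarrow> (int \<Rightarrow> 'o) \<times> (int \<Rightarrow> bool)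
    \<Rightarrow> ((int \<Rightarrow> 'o) \<times> (int \<Rightarrow> bool)) set" where
  "Dk M \<theta> k x = {x' \<in> space (PD M \<theta>). \<forall>j. j \<noteq> k \<longrightarrow> fst x' j = fst x j \<and> snd x' j = snd x j}"

definition delta :: "real \<Rightarrow> real \<Rightarrow> 'o measure \<Rightarrow> real \<Rightarrow> (nat \<Rightarrow> 'o \<Rightarrow> 'a) \<Rightarrow> int \<Rightarrow> ennreal" where
  "delta xi p M \<theta> A k = (\<integral>\<^sup>+ x. (SUP x'\<in>Dk M \<theta> k x. ennreal ((dDelta xi (gmap A x) (gmap A x')) powr p)) \<partial>PD M \<theta>)"

end

theory Submission
  imports Defs
begin

text \<open>The supremum over \<open>D\<^sub>k(x)\<close> only depends on the coin sequence \<open>z\<close> of \<open>x\<close>.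
  For \<open>k < 0\<close>, resampling coordinate \<open>k\<close> does not move any renewal time \<open>t\<^sub>n\<close> as soon as some
  renewal falls in \<open>(k, 0]\<close>, so \<open>g\<close> can only change on an event of probability \<open>(1 - \<theta>)\<^bsup>|k|\<^esup>\<close>.
  For \<open>k > 0\<close>, the renewal times before \<open>k\<close> and the variables \<open>\<omega>\<close> at them are untouched, so if
  \<open>N\<close> renewals occur in \<open>(0, k)\<close> the images agree in their first \<open>N\<close> symbols and have distance
  at most \<open>\<xi>\<^sup>N\<close>; independence of the coins gives \<open>E \<xi>\<^bsup>pN\<^esup> = (1 - \<theta> + \<theta>\<xi>\<^sup>p)\<^bsup>k-1\<^esup>\<close>.\<close>

abbreviation bernoulli_coins :: "real \<Rightarrow> (int \<Rightarrow> bool) measure" where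
  "bernoulli_coins \<theta> \<equiv> \<Pi>\<^sub>M j\<in>(UNIV::int set). measure_pmf (bernoulli_pmf \<theta>)"

lemma nn_integral_bernoulli_coins_prod:
  fixes w :: "bool \<Rightarrow> ennreal" and J :: "int set"
  assumes "finite J" "0 \<le> \<theta>" "\<theta> \<le> 1"
  shows "(\<integral>\<^sup>+z. (\<Prod>j\<in>J. w (z j)) \<partial>bernoulli_coins \<theta>)
           = (\<Prod>j\<in>J. w True * ennreal \<theta> + w False * ennreal (1 - \<theta>))"
proof -
  interpret product_prob_space "\<lambda>_. measure_pmf (bernoulli_pmf \<theta>)" "UNIV::int set"
    by unfold_locales (simp add: prob_space_measure_pmf)
  have "(\<integral>\<^sup>+z. (\<Prod>j\<in>J. w (z j)) \<partial>bernoulli_coins \<theta>)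
      = (\<integral>\<^sup>+z. (\<Prod>j\<in>J. w (restrict z J j)) \<partial>bernoulli_coins \<theta>)"
    by (intro nn_integral_cong prod.cong) auto
  also have "\<dots> = (\<integral>\<^sup>+z. (\<Prod>j\<in>J. w (z j)) \<partial>distr (bernoulli_coins \<theta>)
                      (\<Pi>\<^sub>M j\<in>J. measure_pmf (bernoulli_pmf \<theta>)) (\<lambda>x. restrict x J))"
    by (subst nn_integral_distr) (auto intro!: measurable_restrict_subset)
  also have "\<dots> = (\<integral>\<^sup>+z. (\<Prod>j\<in>J. w (z j)) \<partial>(\<Pi>\<^sub>M j\<in>J. measure_pmf (bernoulli_pmf \<theta>)))"
    by (subst distr_PiM_restrict_finite) (use assms in auto)
  also have "\<dots> = (\<Prod>j\<in>J. \<integral>\<^sup>+b. w b \<partial>bernoulli_pmf \<theta>)"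
    by (rule product_nn_integral_prod) (use assms in auto)
  also have "\<dots> = (\<Prod>j\<in>J. w True * ennreal \<theta> + w False * ennreal (1 - \<theta>))"
    by (subst nn_integral_measure_pmf_support[of UNIV]) (auto simp: UNIV_bool assms add.commute)
  finally show ?thesis .
qed

lemma nn_integral_PD_snd:
  assumes "prob_space M" and [measurable]: "G \<in> borel_measurable (bernoulli_coins \<theta>)"
  shows "(\<integral>\<^sup>+x. G (snd x) \<partial>PD M \<theta>) = (\<integral>\<^sup>+z. G z \<partial>bernoulli_coins \<theta>)"
proof -
  interpret M: prob_space M by fact
  interpret \<Omega>: product_prob_space "\<lambda>_. M" "UNIV::int set"
    by unfold_locales
  interpret coins: product_prob_space "\<lambda>_. measure_pmf (bernoulli_pmf \<theta>)" "UNIV::int set"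
    by unfold_locales (simp add: prob_space_measure_pmf)
  interpret pair_sigma_finite "\<Pi>\<^sub>M j\<in>(UNIV::int set). M" "bernoulli_coins \<theta>"
    by unfold_locales
  have "(\<integral>\<^sup>+x. G (snd x) \<partial>PD M \<theta>)
      = (\<integral>\<^sup>+z. (\<integral>\<^sup>+\<omega>. G z \<partial>(\<Pi>\<^sub>M j\<in>(UNIV::int set). M)) \<partial>bernoulli_coins \<theta>)"
    unfolding PD_def by (subst nn_integral_snd[symmetric]) auto
  then show ?thesis
    by (simp add: \<Omega>.emeasure_space_1)
qed

lemma Least_int_bounded_below:
  fixes P :: "int \<Rightarrow> bool"
  assumes "P w" "\<And>j. P j \<Longrightarrow> t < j"
  shows "P (Least P) \<and> (\<forall>j. P j \<longrightarrow> Least P \<le> j)"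
proof -
  let ?S = "{j. P j \<and> j \<le> w}"
  have fin: "finite ?S"
    by (rule finite_subset[of _ "{t<..w}"]) (auto simp: assms(2))
  have m: "P (Min ?S)" "Min ?S \<le> w"
    using Min_in[OF fin] assms(1) by auto
  have min: "Min ?S \<le> j" if "P j" for j
    using that fin m(2) by (cases "j \<le> w") auto
  have "Least P = Min ?S"
    by (rule Least_equality) (use m min in auto)
  then show ?thesis
    using m min by auto
qed

lemma Greatest_int_bounded_above:
  fixes P :: "int \<Rightarrow> bool"
  assumes "P w" "\<And>j. P j \<Longrightarrow> j \<le> t"
  shows "P (Greatest P) \<and> (\<forall>j. P j \<longrightarrow> j \<le> Greatest P)"
proof -
  let ?S = "{j. P j \<and> w \<le> j}"
  have fin: "finite ?S"
    by (rule finite_subset[of _ "{w..t}"]) (auto simp: assms(2))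
  have m: "P (Max ?S)" "w \<le> Max ?S"
    using Max_in[OF fin] assms(1) by auto
  have max: "j \<le> Max ?S" if "P j" for j
    using that fin m(2) by (cases "w \<le> j") auto
  have "Greatest P = Max ?S"
    by (rule Greatest_equality) (use m max in auto)
  then show ?thesis
    using m max by auto
qed

lemma dX_le_power:
  assumes "0 \<le> xi" "xi \<le> 1" "\<forall>j<n. y j = y' j"
  shows "dX xi y y' \<le> xi ^ n"
proof (cases "y = y'")
  case False
  then obtain j0 where "y j0 \<noteq> y' j0" by auto
  then have "y (LEAST j. y j \<noteq> y' j) \<noteq> y' (LEAST j. y j \<noteq> y' j)" by (rule LeastI)
  then have "n \<le> (LEAST j. y j \<noteq> y' j)" using assms(3) by (meson not_le)
  then show ?thesis
    using False assms by (simp add: dX_def power_decreasing)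
qed (use assms in \<open>simp add: dX_def\<close>)

lemma dDelta_nonneg_le_one: "0 \<le> xi \<Longrightarrow> xi \<le> 1 \<Longrightarrow> 0 \<le> dDelta xi u v \<and> dDelta xi u v \<le> 1"
  by (auto simp: dDelta_def dX_def power_le_one)

lemma tseq_0_perturb:
  assumes "\<forall>j. j \<noteq> k \<longrightarrow> z' j = z j" "w \<le> 0" "z w" "k < w \<or> 0 < k"
  shows "tseq z' 0 = tseq z 0 \<and> w \<le> tseq z 0 \<and> tseq z 0 \<le> 0"
proof -
  let ?P = "\<lambda>j. j \<le> 0 \<and> z j"
  have G: "?P (Greatest ?P) \<and> (\<forall>j. ?P j \<longrightarrow> j \<le> Greatest ?P)"
    by (rule Greatest_int_bounded_above[of _ w 0]) (use assms(2,3) in auto)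
  then have "w \<le> Greatest ?P"
    using assms(2,3) by blast
  then have "Greatest ?P \<noteq> k"
    using G assms(4) by auto
  have "(GREATEST j. j \<le> 0 \<and> z' j) = Greatest ?P"
  proof (rule Greatest_equality)
    show "Greatest ?P \<le> 0 \<and> z' (Greatest ?P)"
      using G \<open>Greatest ?P \<noteq> k\<close> assms(1) by auto
    show "j \<le> Greatest ?P" if "j \<le> 0 \<and> z' j" for j
      using that G \<open>w \<le> Greatest ?P\<close> assms(1,4) by (cases "j = k") auto
  qed
  then show ?thesis
    using G \<open>w \<le> Greatest ?P\<close> by simp
qed

lemma tseq_Suc_perturb:
  assumes "\<forall>j. j \<noteq> k \<longrightarrow> z' j = z j" "tseq z' n = tseq z n" "tseq z n < v" "z v"
    and "k \<le> tseq z n \<or> v < k"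
  shows "tseq z' (Suc n) = tseq z (Suc n) \<and> tseq z n < tseq z (Suc n) \<and> tseq z (Suc n) \<le> v
           \<and> (\<forall>j. tseq z n < j \<and> j < tseq z (Suc n) \<longrightarrow> \<not> z j)"
proof -
  let ?t = "tseq z n"
  let ?P = "\<lambda>j. ?t < j \<and> z j"
  have L: "?P (Least ?P) \<and> (\<forall>j. ?P j \<longrightarrow> Least ?P \<le> j)"
    by (rule Least_int_bounded_below[of _ v ?t]) (use assms(3,4) in auto)
  then have "Least ?P \<le> v"
    using assms(3,4) by blast
  then have "Least ?P \<noteq> k"
    using L assms(5) by auto
  have "(LEAST j. ?t < j \<and> z' j) = Least ?P"
  proof (rule Least_equality)
    show "?t < Least ?P \<and> z' (Least ?P)"
      using L \<open>Least ?P \<noteq> k\<close> assms(1) by auto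
    show "Least ?P \<le> j" if "?t < j \<and> z' j" for j
      using that L \<open>Least ?P \<le> v\<close> assms(1,5) by (cases "j = k") auto
  qed
  moreover have "\<forall>j. ?t < j \<and> j < Least ?P \<longrightarrow> \<not> z j"
    using L by (meson not_le)
  ultimately show ?thesis
    using L \<open>Least ?P \<le> v\<close> assms(2) by simp
qed

lemma tseq_perturb_past:
  assumes "\<forall>j. j \<noteq> k \<longrightarrow> z' j = z j" "k < w" "w \<le> 0" "z w" "\<forall>m. \<exists>j>m. z j"
  shows "tseq z' n = tseq z n \<and> k < tseq z n"
proof (induction n)
  case 0
  show ?case
    using tseq_0_perturb[OF assms(1,3,4)] assms(2) by (auto simp del: tseq.simps)
next
  case (Suc n)
  then have IH: "tseq z' n = tseq z n" "k \<le> tseq z n"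
    by simp_all
  obtain v where "tseq z n < v" "z v"
    using assms(5) by blast
  with IH have "tseq z' (Suc n) = tseq z (Suc n)" "tseq z n < tseq z (Suc n)"
    using tseq_Suc_perturb[OF assms(1)] by blast+
  then show ?case
    using IH(2) by simp
qed

definition renewal_count :: "(int \<Rightarrow> bool) \<Rightarrow> int \<Rightarrow> nat" where
  "renewal_count z t = card {j. 0 < j \<and> j \<le> t \<and> z j}"

lemma renewal_count_nonpos:
  assumes "t \<le> 0"
  shows "renewal_count z t = 0"
proof -
  have "{j. 0 < j \<and> j \<le> t \<and> z j} = {}"
    using assms by auto
  then show ?thesis
    unfolding renewal_count_def by (simp only: card.empty)
qed

lemma renewal_count_le_Suc:
  assumes "t \<le> t'" "\<forall>j. t < j \<and> j < t' \<longrightarrow> \<not> z j"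
  shows "renewal_count z t' \<le> Suc (renewal_count z t)"
proof -
  let ?R = "{j. 0 < j \<and> j \<le> t \<and> z j}"
  have "{j. 0 < j \<and> j \<le> t' \<and> z j} \<subseteq> insert t' ?R"
    using assms(2) by (auto simp: not_le order.order_iff_strict)
  moreover have "finite ?R"
    by (rule finite_subset[of _ "{0<..t}"]) auto
  ultimately have "renewal_count z t' \<le> card (insert t' ?R)"
    unfolding renewal_count_def by (intro card_mono) auto
  also have "\<dots> \<le> Suc (renewal_count z t)"
    using \<open>finite ?R\<close> by (simp add: renewal_count_def card_insert_if)
  finally show ?thesis .
qed

lemma tseq_perturb_future:
  assumes "0 < k" "\<forall>j. j \<noteq> k \<longrightarrow> z' j = z j" "w \<le> 0" "z w"
    and "n \<le> renewal_count z (k - 1)"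
  shows "tseq z' n = tseq z n \<and> tseq z n < k \<and> renewal_count z (tseq z n) \<le> n"
  using assms(5)
proof (induction n)
  case 0
  have "tseq z' 0 = tseq z 0" "tseq z 0 \<le> 0"
    using tseq_0_perturb[OF assms(2-4)] assms(1) by blast+
  then show ?case
    using assms(1) renewal_count_nonpos[of "tseq z 0" z] by (simp del: tseq.simps)
next
  case (Suc n)
  let ?t = "tseq z n"
  have IH: "tseq z' n = ?t" "?t < k" "renewal_count z ?t \<le> n"
    using Suc by auto
  have "\<exists>v. ?t < v \<and> v < k \<and> z v"
  proof (rule ccontr)
    assume "\<not> ?thesis"
    then have "{j. 0 < j \<and> j \<le> k - 1 \<and> z j} = {j. 0 < j \<and> j \<le> ?t \<and> z j}"
      using IH(2) by force
    then show False
      using IH(3) Suc.prems by (simp add: renewal_count_def)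
  qed
  then obtain v where v: "?t < v" "v < k" "z v"
    by blast
  then have step: "tseq z' (Suc n) = tseq z (Suc n)" "?t < tseq z (Suc n)" "tseq z (Suc n) \<le> v"
    "\<forall>j. ?t < j \<and> j < tseq z (Suc n) \<longrightarrow> \<not> z j"
    using tseq_Suc_perturb[OF assms(2) IH(1) v(1,3) disjI2[OF v(2)]] by blast+
  then have "renewal_count z (tseq z (Suc n)) \<le> Suc (renewal_count z ?t)"
    by (intro renewal_count_le_Suc less_imp_le)
  then show ?case
    using step(1,3) v(2) IH(3) by (simp del: tseq.simps)
qed

definition sup_bound :: "real \<Rightarrow> real \<Rightarrow> int \<Rightarrow> (int \<Rightarrow> bool) \<Rightarrow> ennreal" where
  "sup_bound xi p k z =
     (if k < 0 then (\<Prod>j\<in>{k<..0}. if z j then 0 else 1)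
      else if 0 < k then (\<Prod>j\<in>{0<..<k}. if z j then ennreal (xi powr p) else 1)
      else 1)"

lemma measurable_sup_bound [measurable]: "sup_bound xi p k \<in> borel_measurable (bernoulli_coins \<theta>)"
  unfolding sup_bound_def by measurable

lemma sup_bound_pos: "0 < k \<Longrightarrow> sup_bound xi p k z = ennreal ((xi powr p) ^ renewal_count z (k - 1))"
proof -
  assume "0 < k"
  have "{0<..<k} \<inter> {j. z j} = {j. 0 < j \<and> j \<le> k - 1 \<and> z j}" by auto
  then show ?thesis
    using \<open>0 < k\<close> by (simp add: sup_bound_def prod.If_cases renewal_count_def ennreal_power)
qed

lemma gmap_perturb_past:
  assumes "\<forall>j. j \<noteq> k \<longrightarrow> \<omega>' j = \<omega> j \<and> z' j = z j"
    and "k < w" "w \<le> 0" "z w" "\<forall>m. \<exists>j>m. z j"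
  shows "gmap A (\<omega>', z') = gmap A (\<omega>, z)"
proof -
  have agree: "\<forall>j. j \<noteq> k \<longrightarrow> z' j = z j"
    using assms(1) by blast
  have ts: "tseq z' n = tseq z n" "tseq z n \<noteq> k" for n
    using tseq_perturb_past[OF agree assms(2-5)] by auto
  then have "\<omega>' (tseq z n) = \<omega> (tseq z n)" for n
    using assms(1) by blast
  then show ?thesis
    using ts by (simp add: gmap_def del: tseq.simps)
qed

lemma dDelta_gmap_perturb_future:
  assumes "0 \<le> xi" "xi \<le> 1" "0 < k" "\<forall>j. j \<noteq> k \<longrightarrow> \<omega>' j = \<omega> j \<and> z' j = z j"
    and "w \<le> 0" "z w"
  shows "dDelta xi (gmap A (\<omega>, z)) (gmap A (\<omega>', z')) \<le> xi ^ renewal_count z (k - 1)"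
proof -
  let ?N = "renewal_count z (k - 1)"
  have agree: "\<forall>j. j \<noteq> k \<longrightarrow> z' j = z j"
    using assms(4) by blast
  have ts: "tseq z' n = tseq z n" "tseq z n \<noteq> k" if "n \<le> ?N" for n
    using tseq_perturb_future[OF assms(3) agree assms(5,6) that] by auto
  then have om: "\<omega>' (tseq z n) = \<omega> (tseq z n)" if "n \<le> ?N" for n
    using that assms(4) by blast
  have "snd (gmap A (\<omega>, z)) = snd (gmap A (\<omega>', z'))"
    using ts(1)[of 0] by (simp add: gmap_def del: tseq.simps)
  moreover have "fst (gmap A (\<omega>, z)) j = fst (gmap A (\<omega>', z')) j" if "j < ?N" for j
    using that ts(1)[of j] ts(1)[of "Suc j"] om[of j] by (simp add: gmap_def del: tseq.simps)
  ultimately show ?thesis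
    using assms(1,2) by (auto simp: dDelta_def intro!: dX_le_power)
qed

lemma dDelta_gmap_powr_le_sup_bound:
  assumes "0 < xi" "xi < 1" "0 < p" "\<forall>j. j \<noteq> k \<longrightarrow> \<omega>' j = \<omega> j \<and> z' j = z j"
    and "w \<le> 0" "z w" "\<forall>m. \<exists>j>m. z j"
  shows "ennreal (dDelta xi (gmap A (\<omega>, z)) (gmap A (\<omega>', z')) powr p) \<le> sup_bound xi p k z"
proof -
  let ?d = "dDelta xi (gmap A (\<omega>, z)) (gmap A (\<omega>', z'))"
  have d: "0 \<le> ?d \<and> ?d \<le> 1"
    by (rule dDelta_nonneg_le_one) (use assms(1,2) in auto)
  then have d_powr: "?d powr p \<le> 1"
    using assms(3) powr_mono2[of p ?d 1] by simp
  consider "k < 0" | "k = 0" | "0 < k" by linarith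
  then show ?thesis
  proof cases
    case 1
    show ?thesis
    proof (cases "\<exists>j. k < j \<and> j \<le> 0 \<and> z j")
      case True
      then obtain v where "k < v" "v \<le> 0" "z v" by blast
      then have "gmap A (\<omega>', z') = gmap A (\<omega>, z)"
        using gmap_perturb_past[OF assms(4) _ _ _ assms(7)] by blast
      then have "?d = 0"
        by (simp add: dDelta_def dX_def)
      then show ?thesis using assms(3) by simp
    next
      case False
      then have "sup_bound xi p k z = 1" using 1 by (auto simp: sup_bound_def intro!: prod.neutral)
      then show ?thesis using d_powr by simp
    qed
  next
    case 2
    then show ?thesis using d_powr by (simp add: sup_bound_def)
  next
    case 3
    let ?N = "renewal_count z (k - 1)"
    have "?d \<le> xi ^ ?N"
      by (rule dDelta_gmap_perturb_future[OF _ _ 3 assms(4-6)]) (use assms(1,2) in auto)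
    then have "?d powr p \<le> (xi ^ ?N) powr p"
      using d assms(3) by (intro powr_mono2) auto
    also have "\<dots> = (xi powr p) ^ ?N"
      using assms by (simp add: powr_realpow[symmetric] powr_powr powr_power mult.commute)
    finally show ?thesis using 3 by (simp add: sup_bound_pos ennreal_leI)
  qed
qed

lemma null_sets_no_renewal:
  assumes "prob_space M" "0 < \<theta>" "\<theta> \<le> 1" "infinite S"
  shows "{x\<in>space (PD M \<theta>). \<forall>j\<in>S. \<not> snd x j} \<in> null_sets (PD M \<theta>)"
proof -
  let ?A = "{x\<in>space (PD M \<theta>). \<forall>j\<in>S. \<not> snd x j}"
  have "emeasure (PD M \<theta>) ?A \<le> ennreal ((1 - \<theta>) ^ n)" for n
  proof -
    obtain T where T: "T \<subseteq> S" "finite T" "card T = n"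
      using infinite_arbitrarily_large[OF assms(4)] by blast
    let ?B = "{x\<in>space (PD M \<theta>). \<forall>j\<in>T. \<not> snd x j}"
    have B: "?B \<in> sets (PD M \<theta>)" unfolding PD_def by measurable
    have "emeasure (PD M \<theta>) ?A \<le> emeasure (PD M \<theta>) ?B"
      by (rule emeasure_mono) (use T B in auto)
    also have "\<dots> = (\<integral>\<^sup>+x. indicator ?B x \<partial>PD M \<theta>)"
      using B by simp
    also have "\<dots> = (\<integral>\<^sup>+x. (\<Prod>j\<in>T. if snd x j then 0 else 1) \<partial>PD M \<theta>)"
      by (rule nn_integral_cong) (auto simp: indicator_def T(2))
    also have "\<dots> = (\<integral>\<^sup>+z. (\<Prod>j\<in>T. if z j then 0 else 1) \<partial>bernoulli_coins \<theta>)"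
      by (rule nn_integral_PD_snd[OF assms(1)]) measurable
    also have "\<dots> = ennreal ((1 - \<theta>) ^ n)"
      using assms T by (subst nn_integral_bernoulli_coins_prod) (auto simp: ennreal_power)
    finally show ?thesis .
  qed
  moreover have "(\<lambda>n. ennreal ((1 - \<theta>) ^ n)) \<longlonglongrightarrow> ennreal 0"
    by (rule tendsto_ennrealI, rule LIMSEQ_power_zero) (use assms in auto)
  ultimately have "emeasure (PD M \<theta>) ?A \<le> 0"
    using LIMSEQ_le_const by fastforce
  moreover have "?A \<in> sets (PD M \<theta>)" unfolding PD_def by measurable
  ultimately show ?thesis by auto
qed

lemma AE_PD_renewals:
  assumes "prob_space M" "0 < \<theta>" "\<theta> \<le> 1"
  shows "AE x in PD M \<theta>. (\<exists>j\<le>0. snd x j) \<and> (\<forall>m. \<exists>j>m. snd x j)"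
proof -
  have "AE x in PD M \<theta>. \<exists>j\<le>0. snd x j"
    by (rule AE_I'[OF null_sets_no_renewal[OF assms infinite_Iic]]) auto
  moreover have "AE x in PD M \<theta>. \<forall>m. \<exists>j>m. snd x j"
    unfolding AE_all_countable
    by (intro allI AE_I'[OF null_sets_no_renewal[OF assms infinite_Ioi]]) auto
  ultimately show ?thesis by auto
qed

lemma delta_le_nn_integral_sup_bound:
  assumes "0 < xi" "xi < 1" "0 < \<theta>" "\<theta> < 1" "prob_space M" "0 < p"
  shows "delta xi p M \<theta> A k \<le> (\<integral>\<^sup>+z. sup_bound xi p k z \<partial>bernoulli_coins \<theta>)"
proof -
  have "delta xi p M \<theta> A k \<le> (\<integral>\<^sup>+x. sup_bound xi p k (snd x) \<partial>PD M \<theta>)"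
    unfolding delta_def
  proof (rule nn_integral_mono_AE)
    have pointwise: "(SUP x'\<in>Dk M \<theta> k x. ennreal (dDelta xi (gmap A x) (gmap A x') powr p))
            \<le> sup_bound xi p k (snd x)"
      if renewals: "(\<exists>j\<le>0. snd x j) \<and> (\<forall>m. \<exists>j>m. snd x j)" for x
    proof (rule SUP_least)
      fix x' assume "x' \<in> Dk M \<theta> k x"
      obtain \<omega> z \<omega>' z' where x: "x = (\<omega>, z)" and x': "x' = (\<omega>', z')"
        by fastforce
      have "\<forall>j. j \<noteq> k \<longrightarrow> \<omega>' j = \<omega> j \<and> z' j = z j"
        using \<open>x' \<in> Dk M \<theta> k x\<close> by (simp add: Dk_def x x')
      moreover obtain w where "w \<le> 0" "z w" "\<forall>m. \<exists>j>m. z j"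
        using renewals by (auto simp: x)
      ultimately show "ennreal (dDelta xi (gmap A x) (gmap A x') powr p) \<le> sup_bound xi p k (snd x)"
        unfolding x x' snd_conv by (rule dDelta_gmap_powr_le_sup_bound[OF assms(1,2,6)])
    qed
    then show "AE x in PD M \<theta>. (SUP x'\<in>Dk M \<theta> k x. ennreal (dDelta xi (gmap A x) (gmap A x') powr p))
                 \<le> sup_bound xi p k (snd x)"
      using eventually_mono[OF AE_PD_renewals[of M \<theta>] pointwise] assms by simp
  qed
  also have "\<dots> = (\<integral>\<^sup>+z. sup_bound xi p k z \<partial>bernoulli_coins \<theta>)"
    by (rule nn_integral_PD_snd[OF assms(5)]) measurable
  finally show ?thesis .
qed

lemma nn_integral_sup_bound:
  assumes "0 \<le> \<theta>" "\<theta> \<le> 1"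
  shows "(\<integral>\<^sup>+z. sup_bound xi p k z \<partial>bernoulli_coins \<theta>) =
    (if k < 0 then ennreal ((1 - \<theta>) ^ nat (- k))
     else if 0 < k then ennreal ((1 - \<theta> + \<theta> * xi powr p) ^ nat (k - 1)) else 1)"
proof -
  consider "k < 0" | "k = 0" | "0 < k" by linarith
  then show ?thesis
  proof cases
    case 1
    have "(\<integral>\<^sup>+z. sup_bound xi p k z \<partial>bernoulli_coins \<theta>)
        = (\<integral>\<^sup>+z. (\<Prod>j\<in>{k<..0}. if z j then 0 else 1) \<partial>bernoulli_coins \<theta>)"
      using 1 by (simp add: sup_bound_def)
    also have "\<dots> = ennreal ((1 - \<theta>) ^ nat (- k))"
      using assms by (subst nn_integral_bernoulli_coins_prod) (simp_all add: ennreal_power)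
    finally show ?thesis using 1 by simp
  next
    case 2
    interpret coins: prob_space "bernoulli_coins \<theta>"
      by (intro prob_space_PiM prob_space_measure_pmf)
    show ?thesis
      using 2 by (simp add: sup_bound_def coins.emeasure_space_1)
  next
    case 3
    have coin: "ennreal (xi powr p) * ennreal \<theta> + 1 * ennreal (1 - \<theta>) = ennreal (1 - \<theta> + \<theta> * xi powr p)"
      using assms by (simp add: ennreal_plus ennreal_mult' add.commute mult.commute)
    have "(\<integral>\<^sup>+z. sup_bound xi p k z \<partial>bernoulli_coins \<theta>)
        = (\<integral>\<^sup>+z. (\<Prod>j\<in>{0<..<k}. if z j then ennreal (xi powr p) else 1) \<partial>bernoulli_coins \<theta>)"
      using 3 by (simp add: sup_bound_def)
    also have "\<dots> = (\<Prod>j\<in>{0<..<k}. ennreal (xi powr p) * ennreal \<theta> + 1 * ennreal (1 - \<theta>))"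
      using assms by (subst nn_integral_bernoulli_coins_prod) simp_all
    also have "\<dots> = ennreal (1 - \<theta> + \<theta> * xi powr p) ^ nat (k - 1)"
      by (simp only: prod_constant coin card_greaterThanLessThan_int) simp
    also have "\<dots> = ennreal ((1 - \<theta> + \<theta> * xi powr p) ^ nat (k - 1))"
      using assms by (intro ennreal_power) simp
    finally show ?thesis using 3 by simp
  qed
qed

lemma nn_integral_sup_bound_le_geometric:
  assumes "0 \<le> \<theta>" "\<theta> \<le> 1" "0 < r" "r \<le> 1" "1 - \<theta> + \<theta> * xi powr p \<le> r"
  shows "(\<integral>\<^sup>+z. sup_bound xi p k z \<partial>bernoulli_coins \<theta>) \<le> ennreal (1 / r * r ^ nat \<bar>k\<bar>)"
proof -
  have "0 \<le> \<theta> * xi powr p"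
    using assms(1) by simp
  then have "1 - \<theta> \<le> r"
    using assms(5) by linarith
  have "1 \<le> 1 / r"
    using assms(3,4) by simp
  then have r_pow: "r ^ n \<le> 1 / r * r ^ n" for n
    using mult_right_mono[of 1 "1 / r" "r ^ n"] assms(3) by simp
  consider "k < 0" | "k = 0" | "0 < k" by linarith
  then show ?thesis
  proof cases
    case 1
    have "(1 - \<theta>) ^ nat (- k) \<le> r ^ nat (- k)"
      using \<open>1 - \<theta> \<le> r\<close> assms(2) by (intro power_mono) auto
    also have "\<dots> \<le> 1 / r * r ^ nat \<bar>k\<bar>"
      using 1 r_pow[of "nat (- k)"] by simp
    finally show ?thesis
      using 1 assms(1,2) by (simp add: nn_integral_sup_bound ennreal_leI)
  next
    case 2
    then show ?thesis
      using \<open>1 \<le> 1 / r\<close> assms(1,2) by (simp add: nn_integral_sup_bound)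
  next
    case 3
    have "(1 - \<theta> + \<theta> * xi powr p) ^ nat (k - 1) \<le> r ^ nat (k - 1)"
      using assms(5) \<open>1 - \<theta> \<le> r\<close> \<open>0 \<le> \<theta> * xi powr p\<close> assms(2) by (intro power_mono) auto
    also have "r ^ nat (k - 1) = 1 / r * r ^ nat \<bar>k\<bar>"
    proof -
      have "nat \<bar>k\<bar> = Suc (nat (k - 1))"
        using 3 by simp
      then show ?thesis
        using assms(3) by simp
    qed
    finally show ?thesis
      using 3 assms(1,2) by (simp add: nn_integral_sup_bound ennreal_leI)
  qed
qed

theorem proposition5p1:
  fixes PA :: "'a::countable pmf" and hA :: "'a \<Rightarrow> nat" and xi \<theta> p :: real
    and M :: "'o measure" and A :: "nat \<Rightarrow> 'o \<Rightarrow> 'a"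
  assumes "0 < xi" "xi < 1" "0 < \<theta>" "\<theta> < 1"
    and "integrable (measure_pmf PA) (\<lambda>a. real (hA a))"
    and "\<forall>n\<ge>1. measure_pmf.prob PA {a. hA a = n} = \<theta> * (1 - \<theta>) ^ (n - 1)"
    and "prob_space M"
    and "\<forall>n\<ge>1. A n \<in> M \<rightarrow>\<^sub>M count_space UNIV"
    and "\<forall>n\<ge>1. \<forall>a. measure M {\<omega> \<in> space M. A n \<omega> = a} =
           (if hA a = n then pmf PA a / measure_pmf.prob PA {b. hA b = n} else 0)"
    and "p > 2"
  shows "\<exists>C>0. \<exists>td. 0 < td \<and> td < 1 \<and>
           (\<forall>k::int. delta xi p M \<theta> A k \<le> ennreal (C * td ^ nat \<bar>k\<bar>))"
proof -
  define r where "r = 1 - \<theta> + \<theta> * xi powr p"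
  have "0 < xi powr p" "xi powr p < 1"
    using assms(1,2,10) powr_less_mono2[of p xi 1] by auto
  then have "0 < \<theta> * xi powr p" "\<theta> * xi powr p < \<theta>"
    using assms(3) by simp_all
  then have r: "0 < r" "r < 1"
    using assms(4) by (simp_all add: r_def)
  have "delta xi p M \<theta> A k \<le> ennreal (1 / r * r ^ nat \<bar>k\<bar>)" for k
  proof -
    have "delta xi p M \<theta> A k \<le> (\<integral>\<^sup>+z. sup_bound xi p k z \<partial>bernoulli_coins \<theta>)"
      by (rule delta_le_nn_integral_sup_bound) (use assms in auto)
    also have "\<dots> \<le> ennreal (1 / r * r ^ nat \<bar>k\<bar>)"
      by (rule nn_integral_sup_bound_le_geometric) (use assms(3,4) r in \<open>auto simp: r_def\<close>)
    finally show ?thesis .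
  qed
  then show ?thesis
    using r by (intro exI[of _ "1 / r"] exI[of _ r]) auto
qed

end
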